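(* Let $T\in\mathbb{B}(\mathscr{H})$. Then \[ \omega^{2}(T)+\inf_{x\in\mathscr{H},\ \|x\|=1}\left\{\left|\langle |T||T^*|x,x\rangle-\langle |T|x,x\rangle\langle |T^*|x,x\rangle\right|\right\}\le\frac12\left\||T|^{2}+|T^*|^{2}\right\|. \]
   Context: $\mathbb{B}(\mathscr{H})$ is the algebra of bounded operators on a complex Hilbert space $\mathscr{H}$; $|T|=(T^*T)^{1/2}$, $|T^*|=(TT^* )^{1/2}$; $\omega(T)=\sup_{\|x\|=1}|\langle Tx,x\rangle|$ is the numerical radius, and $\|\cdot\|$ is the operator norm. *)

theory Defs
  imports "HOL-Analysis.Analysis"
begin

class complex_vector = real_vector +
  fixes scaleC :: "complex \<Rightarrow> 'a \<Rightarrow> 'a" (infixr \<open>*\<^sub>C\<close> 75)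
  assumes scaleC_add_right: "a *\<^sub>C (x + y) = a *\<^sub>C x + a *\<^sub>C y"
    and scaleC_add_left: "(a + b) *\<^sub>C x = a *\<^sub>C x + b *\<^sub>C x"
    and scaleC_scaleC: "a *\<^sub>C (b *\<^sub>C x) = (a * b) *\<^sub>C x"
    and scaleC_one: "1 *\<^sub>C x = x"
    and scaleR_scaleC: "scaleR r x = complex_of_real r *\<^sub>C x"

class complex_inner = complex_vector + real_normed_vector +
  fixes cinner :: "'a \<Rightarrow> 'a \<Rightarrow> complex"
  assumes cinner_conj_sym: "cinner x y = cnj (cinner y x)"
    and cinner_add_left: "cinner (x + y) z = cinner x z + cinner y z"
    and cinner_scaleC_left: "cinner (a *\<^sub>C x) y = a * cinner x y"
    and cinner_nonneg: "0 \<le> Re (cinner x x)"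
    and cinner_eq_zero_iff: "cinner x x = 0 \<longleftrightarrow> x = 0"
    and norm_eq_sqrt_cinner: "norm x = sqrt (Re (cinner x x))"

class chilbert_space = complex_inner + complete_space

definition bounded_clinear :: "('a::{complex_vector,real_normed_vector} \<Rightarrow> 'b::{complex_vector,real_normed_vector}) \<Rightarrow> bool"
  where "bounded_clinear T \<longleftrightarrow>
     (\<forall>x y. T (x + y) = T x + T y) \<and> (\<forall>c x. T (c *\<^sub>C x) = c *\<^sub>C T x) \<and>
     (\<exists>K. \<forall>x. norm (T x) \<le> norm x * K)"

definition adj :: "('a::chilbert_space \<Rightarrow> 'a) \<Rightarrow> ('a \<Rightarrow> 'a)"
  where "adj T = (SOME S. \<forall>x y. cinner (T x) y = cinner x (S y))"

definition positive_op :: "('a::chilbert_space \<Rightarrow> 'a) \<Rightarrow> bool"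
  where "positive_op A \<longleftrightarrow> bounded_clinear A \<and>
     (\<forall>x. Im (cinner (A x) x) = 0 \<and> 0 \<le> Re (cinner (A x) x))"

definition op_sqrt :: "('a::chilbert_space \<Rightarrow> 'a) \<Rightarrow> ('a \<Rightarrow> 'a)"
  where "op_sqrt P = (THE R. positive_op R \<and> R \<circ> R = P)"

definition abs_op :: "('a::chilbert_space \<Rightarrow> 'a) \<Rightarrow> ('a \<Rightarrow> 'a)"
  where "abs_op T = op_sqrt (adj T \<circ> T)"

definition numerical_radius :: "('a::chilbert_space \<Rightarrow> 'a) \<Rightarrow> real"
  where "numerical_radius T = (SUP x\<in>{x. norm x = 1}. cmod (cinner (T x) x))"

end

theory Submission
  imports Defs
begin

(* With A = |T| and B = |T*| one has T A = B T and B^2 = T T*.  These two relations give the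
   mixed Schwarz inequality |<Tx,y>|^2 <= <Ax,x> <By,y>, proved by factoring T* y through the
   invertible operator A + e and letting e tend to 0.  For a unit vector x write Ax = ax + u and
   Bx = bx + v with u, v orthogonal to x; the defect <ABx,x> - <Ax,x><Bx,x> is then <v,u>, so
   |<Tx,x>|^2 + |<v,u>| <= ab + |u| |v| <= |Ax| |Bx| <= <(A^2 + B^2)x,x> / 2.
   The positive square roots behind |T| and |T*| are constructed as limits of the monotone
   iteration Y |-> (Q + Y^2) / 2 for the contraction Q = I - P / M. *)

lemma scaleC_diff_right: "a *\<^sub>C ((x::'a::complex_vector) - y) = a *\<^sub>C x - a *\<^sub>C y"
  by (metis add_diff_cancel diff_add_cancel scaleC_add_right)

lemma cinner_zero_left [simp]: "cinner 0 (y::'a::complex_inner) = 0"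
  by (metis add_cancel_right_right add_0 cinner_add_left)

lemma cinner_zero_right [simp]: "cinner (x::'a::complex_inner) 0 = 0"
  by (subst cinner_conj_sym) simp

lemma cinner_add_right: "cinner (x::'a::complex_inner) (y + z) = cinner x y + cinner x z"
  by (subst (1 2 3) cinner_conj_sym) (simp add: cinner_add_left)

lemma cinner_scaleC_right: "cinner (x::'a::complex_inner) (a *\<^sub>C y) = cnj a * cinner x y"
  by (subst (1 2) cinner_conj_sym) (simp add: cinner_scaleC_left)

lemma cinner_diff_left: "cinner ((x::'a::complex_inner) - y) z = cinner x z - cinner y z"
  by (metis add_diff_cancel diff_add_cancel cinner_add_left)

lemma cinner_diff_right: "cinner (x::'a::complex_inner) (y - z) = cinner x y - cinner x z"
  by (metis add_diff_cancel diff_add_cancel cinner_add_right)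

lemma cinner_scaleR_left: "cinner (r *\<^sub>R (x::'a::complex_inner)) y = of_real r * cinner x y"
  by (simp add: scaleR_scaleC cinner_scaleC_left)

lemma cinner_scaleR_right: "cinner (x::'a::complex_inner) (r *\<^sub>R y) = of_real r * cinner x y"
  by (simp add: scaleR_scaleC cinner_scaleC_right)

lemmas cinner_simps = cinner_add_left cinner_add_right cinner_diff_left cinner_diff_right
  cinner_scaleC_left cinner_scaleC_right cinner_scaleR_left cinner_scaleR_right

lemma cinner_self_eq_norm_square: "cinner (x::'a::complex_inner) x = of_real ((norm x)\<^sup>2)"
proof -
  have "Im (cinner x x) = 0"
    by (metis cinner_conj_sym cnj.sel(2) equation_minus_iff neg_equal_zero)
  then show ?thesis
    using norm_eq_sqrt_cinner[of x] cinner_nonneg[of x] by (simp add: complex_eq_iff)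
qed

lemma Re_cinner_self [simp]: "Re (cinner (x::'a::complex_inner) x) = (norm x)\<^sup>2"
  by (simp add: cinner_self_eq_norm_square)

lemma norm_cinner_self: "cmod (cinner (x::'a::complex_inner) x) = (norm x)\<^sup>2"
  by (simp only: cinner_self_eq_norm_square norm_of_real) simp

lemma norm_scaleC: "norm (a *\<^sub>C (x::'a::complex_inner)) = cmod a * norm x"
proof -
  have "of_real ((norm (a *\<^sub>C x))\<^sup>2) = cinner (a *\<^sub>C x) (a *\<^sub>C x)"
    by (rule cinner_self_eq_norm_square[symmetric])
  also have "\<dots> = (a * cnj a) * cinner x x"
    by (simp add: cinner_scaleC_left cinner_scaleC_right)
  also have "\<dots> = of_real ((cmod a * norm x)\<^sup>2)"
    by (metis complex_norm_square cinner_self_eq_norm_square of_real_mult power_mult_distrib)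
  finally show ?thesis
    by (simp add: power2_eq_iff_nonneg del: of_real_power)
qed

lemma cinner_eq_right_imp_eq: "(\<And>x. cinner x a = cinner x b) \<Longrightarrow> a = (b::'a::complex_inner)"
  by (metis cinner_diff_right cinner_eq_zero_iff eq_iff_diff_eq_0)

lemma parallelogram_law:
  "(norm (a + b))\<^sup>2 + (norm (a - b))\<^sup>2 = 2 * (norm a)\<^sup>2 + 2 * (norm (b::'a::complex_inner))\<^sup>2"
proof -
  have "cinner (a + b) (a + b) + cinner (a - b) (a - b) = 2 * cinner a a + 2 * cinner b b"
    by (simp add: cinner_simps algebra_simps)
  then have "Re (cinner (a + b) (a + b) + cinner (a - b) (a - b)) = Re (2 * cinner a a + 2 * cinner b b)"
    by (rule arg_cong)
  then show ?thesis
    by simp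
qed

lemma bounded_clinear_iff:
  "bounded_clinear T \<longleftrightarrow> bounded_linear T \<and> (\<forall>c x. T (c *\<^sub>C x) = c *\<^sub>C T x)"
proof
  assume "bounded_clinear T"
  then show "bounded_linear T \<and> (\<forall>c x. T (c *\<^sub>C x) = c *\<^sub>C T x)"
    unfolding bounded_clinear_def
    by (metis bounded_linear_intro scaleR_scaleC)
next
  assume "bounded_linear T \<and> (\<forall>c x. T (c *\<^sub>C x) = c *\<^sub>C T x)"
  then show "bounded_clinear T"
    unfolding bounded_clinear_def by (metis bounded_linear.bounded linear_add bounded_linear.linear)
qed

lemma bounded_clinear_imp_bounded_linear: "bounded_clinear T \<Longrightarrow> bounded_linear T"
  by (simp add: bounded_clinear_iff)

lemma bounded_clinear_apply:
  assumes "bounded_clinear T"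
  shows "T (x + y) = T x + T y" "T (x - y) = T x - T y" "T (- x) = - T x" "T 0 = 0"
    "T (r *\<^sub>R x) = r *\<^sub>R T x" "T (c *\<^sub>C x) = c *\<^sub>C T x"
proof -
  have "linear T"
    using assms by (simp add: bounded_clinear_iff bounded_linear.linear)
  then show "T (x + y) = T x + T y" "T (x - y) = T x - T y" "T (- x) = - T x" "T 0 = 0"
    "T (r *\<^sub>R x) = r *\<^sub>R T x"
    by (simp_all add: linear_add linear_diff linear_neg linear_0 linear_scale)
  show "T (c *\<^sub>C x) = c *\<^sub>C T x"
    using assms by (simp add: bounded_clinear_iff)
qed

lemma bounded_clinear_ident: "bounded_clinear (\<lambda>x. x)"
  by (simp add: bounded_clinear_iff)

lemma bounded_clinear_compose:
  "bounded_clinear A \<Longrightarrow> bounded_clinear B \<Longrightarrow> bounded_clinear (\<lambda>x. A (B x))"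
  by (simp add: bounded_clinear_iff bounded_linear_compose)

lemma bounded_clinear_add:
  "bounded_clinear A \<Longrightarrow> bounded_clinear B \<Longrightarrow> bounded_clinear (\<lambda>x. A x + B x)"
  by (simp add: bounded_clinear_iff bounded_linear_add scaleC_add_right)

lemma bounded_clinear_diff:
  "bounded_clinear A \<Longrightarrow> bounded_clinear B \<Longrightarrow> bounded_clinear (\<lambda>x. A x - B x)"
  by (simp add: bounded_clinear_iff bounded_linear_sub scaleC_diff_right)

lemma bounded_clinear_const_scaleR: "bounded_clinear A \<Longrightarrow> bounded_clinear (\<lambda>x. r *\<^sub>R A x)"
  unfolding bounded_clinear_iff
  by (simp add: bounded_linear_const_scaleR) (simp add: scaleR_scaleC scaleC_scaleC mult.commute)

lemma bounded_clinear_funpow: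
  fixes Q :: "'a::{complex_vector,real_normed_vector} \<Rightarrow> 'a"
  assumes "bounded_clinear Q"
  shows "bounded_clinear (Q ^^ k)"
proof (induction k)
  case 0
  show ?case
    using bounded_clinear_ident by (simp add: id_def)
next
  case (Suc k)
  then show ?case
    using bounded_clinear_compose[OF assms Suc] by (simp add: o_def)
qed

definition selfadjoint :: "('a::complex_inner \<Rightarrow> 'a) \<Rightarrow> bool"
  where "selfadjoint A \<longleftrightarrow> (\<forall>x y. cinner (A x) y = cinner x (A y))"

lemma selfadjoint_cinner_self_real:
  "selfadjoint A \<Longrightarrow> cinner (A x) x = of_real (Re (cinner (A x) x))"
  unfolding selfadjoint_def
  by (metis cinner_conj_sym Reals_cnj_iff complex_is_Real_iff of_real_Re)

lemma positive_op_imp_bounded_clinear: "positive_op A \<Longrightarrow> bounded_clinear A"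
  by (simp add: positive_op_def)

lemma positive_op_form_nonneg: "positive_op A \<Longrightarrow> 0 \<le> Re (cinner (A x) x)"
  by (simp add: positive_op_def)

text \<open>Polarization: the sesquilinear form \<open>\<langle>Ax,y\<rangle> - \<langle>x,Ay\<rangle>\<close> vanishes on the
  diagonal, so its values at \<open>(x,y)\<close> and \<open>(y,x)\<close> are both opposite (test \<open>x + y\<close>) and
  equal (test \<open>x + \<i>y\<close>).\<close>
lemma positive_op_imp_selfadjoint:
  assumes "positive_op A"
  shows "selfadjoint A"
proof -
  have A: "bounded_clinear A" and real: "\<And>x. Im (cinner (A x) x) = 0"
    using assms unfolding positive_op_def by auto
  define f where "f x y = cinner (A x) y - cinner x (A y)" for x y
  have diag: "f x x = 0" for x
    using real[of x] cinner_conj_sym[of x "A x"] by (simp add: f_def complex_eq_iff)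
  have expand: "f (x + c *\<^sub>C y) (x + c *\<^sub>C y) = f x x + cnj c * f x y + c * f y x + (c * cnj c) * f y y"
    for x y c
    by (simp add: f_def bounded_clinear_apply[OF A] cinner_simps algebra_simps)
  have "f x y = 0" for x y
  proof -
    have "f x y + f y x = 0"
      using expand[of x 1 y] diag by (simp add: scaleC_one)
    moreover have "- \<i> * f x y + \<i> * f y x = 0"
      using expand[of x \<i> y] diag by simp
    ultimately show ?thesis
      by (metis add.inverse_neutral add_cancel_right_right add_eq_0_iff2 complex_i_not_zero
          distrib_left mult_minus_left mult_zero_right no_zero_divisors one_add_one zero_neq_numeral)
  qed
  then show ?thesis
    by (simp add: selfadjoint_def f_def)
qed

lemma positive_opI:
  assumes "bounded_clinear A" "selfadjoint A" "\<And>x. 0 \<le> Re (cinner (A x) x)"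
  shows "positive_op A"
  using assms selfadjoint_cinner_self_real[OF assms(2)] unfolding positive_op_def
  by (metis Im_complex_of_real)

lemma positive_op_ident: "positive_op (\<lambda>x. x)"
  by (simp add: positive_opI bounded_clinear_ident selfadjoint_def)

lemma positive_op_add: "positive_op A \<Longrightarrow> positive_op B \<Longrightarrow> positive_op (\<lambda>x. A x + B x)"
  by (simp add: positive_op_def bounded_clinear_add cinner_add_left)

lemma positive_op_const_scaleR: "positive_op A \<Longrightarrow> 0 \<le> r \<Longrightarrow> positive_op (\<lambda>x. r *\<^sub>R A x)"
  by (simp add: positive_op_def bounded_clinear_const_scaleR cinner_scaleR_left)

lemma selfadjoint_form_along_line:
  fixes t :: real
  assumes A: "bounded_clinear A" "selfadjoint A" and c: "c = cinner (A x) y"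
  defines "z \<equiv> x - (of_real t * c) *\<^sub>C y"
  shows "Re (cinner (A z) z) =
    Re (cinner (A x) x) - 2 * t * (cmod c)\<^sup>2 + t\<^sup>2 * (cmod c)\<^sup>2 * Re (cinner (A y) y)"
proof -
  have "cinner (A y) x = cnj c"
    using A(2) c unfolding selfadjoint_def by (metis cinner_conj_sym)
  then have expand: "cinner (A (x - s *\<^sub>C y)) (x - s *\<^sub>C y)
      = cinner (A x) x - (cnj s * c + s * cnj c) + (s * cnj s) * cinner (A y) y" for s
    by (simp add: bounded_clinear_apply[OF A(1)] cinner_diff_left cinner_diff_right
        cinner_scaleC_left cinner_scaleC_right c[symmetric] algebra_simps)
  have cc: "cnj c * c = of_real ((cmod c)\<^sup>2)" "c * cnj c = of_real ((cmod c)\<^sup>2)"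
    by (metis complex_norm_square mult.commute)+
  have "cnj (of_real t * c) * c + (of_real t * c) * cnj c = of_real t * (cnj c * c) + of_real t * (c * cnj c)"
    by (simp add: mult.assoc)
  also have "\<dots> = of_real (2 * t * (cmod c)\<^sup>2)"
    unfolding cc by simp
  finally have cross: "cnj (of_real t * c) * c + (of_real t * c) * cnj c = of_real (2 * t * (cmod c)\<^sup>2)" .
  have "(of_real t * c) * cnj (of_real t * c) = of_real t * of_real t * (c * cnj c)"
    by (simp add: mult_ac)
  also have "\<dots> = of_real (t\<^sup>2 * (cmod c)\<^sup>2)"
    unfolding cc by (simp add: power2_eq_square)
  finally show ?thesis
    unfolding z_def expand cross by simp
qed

lemma nonneg_quadratic_imp_le:
  fixes a b k :: real
  assumes quadratic: "\<And>t. 0 \<le> a - 2 * t * k + t\<^sup>2 * k * b" and "0 \<le> k" "0 \<le> b"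
  shows "k \<le> a * b"
proof (cases "b = 0")
  case True
  have "0 \<le> a - 2 * ((a + 1) / (2 * k)) * k"
    using quadratic[of "(a + 1) / (2 * k)"] True by simp
  then show ?thesis
    using True \<open>0 \<le> k\<close> by (cases "k = 0") (simp_all add: field_simps)
next
  case False
  have "0 \<le> a - 2 * (1 / b) * k + (1 / b)\<^sup>2 * k * b"
    by (rule quadratic)
  then show ?thesis
    using False \<open>0 \<le> b\<close> by (simp add: field_simps power2_eq_square)
qed

lemma selfadjoint_Cauchy_Schwarz:
  assumes "bounded_clinear A" "selfadjoint A" and nonneg: "\<And>z. 0 \<le> Re (cinner (A z) z)"
  shows "(cmod (cinner (A x) y))\<^sup>2 \<le> Re (cinner (A x) x) * Re (cinner (A y) y)"
proof (rule nonneg_quadratic_imp_le)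
  show "0 \<le> Re (cinner (A x) x) - 2 * t * (cmod (cinner (A x) y))\<^sup>2
      + t\<^sup>2 * (cmod (cinner (A x) y))\<^sup>2 * Re (cinner (A y) y)" for t
    using selfadjoint_form_along_line[OF assms(1,2) refl, where t = t] nonneg by metis
qed (simp_all add: nonneg)

lemma positive_op_Cauchy_Schwarz:
  "positive_op A \<Longrightarrow> (cmod (cinner (A x) y))\<^sup>2 \<le> Re (cinner (A x) x) * Re (cinner (A y) y)"
  by (simp add: selfadjoint_Cauchy_Schwarz positive_op_imp_bounded_clinear
      positive_op_imp_selfadjoint positive_op_form_nonneg)

lemma norm_cinner_le: "cmod (cinner x y) \<le> norm x * norm (y::'a::complex_inner)"
proof -
  have "(cmod (cinner x y))\<^sup>2 \<le> (norm x * norm y)\<^sup>2"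
    using selfadjoint_Cauchy_Schwarz[of "\<lambda>x. x" x y]
    by (simp add: bounded_clinear_ident selfadjoint_def power_mult_distrib)
  then show ?thesis
    by (rule power2_le_imp_le) simp
qed

lemma Re_cinner_le: "Re (cinner x y) \<le> norm x * norm (y::'a::complex_inner)"
  using norm_cinner_le[of x y] complex_Re_le_cmod order_trans by blast

lemma bounded_bilinear_cinner: "bounded_bilinear (cinner :: 'a::complex_inner \<Rightarrow> 'a \<Rightarrow> complex)"
proof
  show "cinner (r *\<^sub>R a) b = r *\<^sub>R cinner a b" "cinner a (r *\<^sub>R b) = r *\<^sub>R cinner a b"
    for r and a b :: 'a
    by (simp_all add: cinner_scaleR_left cinner_scaleR_right scaleR_conv_of_real)
  show "\<exists>K. \<forall>a b::'a. norm (cinner a b) \<le> norm a * norm b * K"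
    using norm_cinner_le by (metis mult.right_neutral)
qed (simp_all add: cinner_add_left cinner_add_right)

lemmas tendsto_cinner = bounded_bilinear.tendsto[OF bounded_bilinear_cinner]

lemma positive_op_norm_square_le:
  assumes "positive_op X" and bound: "\<And>z. norm (X z) \<le> c * norm z"
  shows "(norm (X x))\<^sup>2 \<le> c * Re (cinner (X x) x)"
proof -
  have "((norm (X x))\<^sup>2)\<^sup>2 \<le> Re (cinner (X x) x) * Re (cinner (X (X x)) (X x))"
    using positive_op_Cauchy_Schwarz[OF assms(1), of x "X x"] by (simp only: norm_cinner_self)
  also have "\<dots> \<le> Re (cinner (X x) x) * (c * (norm (X x))\<^sup>2)"
  proof (rule mult_left_mono)
    have "Re (cinner (X (X x)) (X x)) \<le> norm (X (X x)) * norm (X x)"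
      by (rule Re_cinner_le)
    also have "\<dots> \<le> c * norm (X x) * norm (X x)"
      by (rule mult_right_mono[OF bound]) simp
    finally show "Re (cinner (X (X x)) (X x)) \<le> c * (norm (X x))\<^sup>2"
      by (simp add: power2_eq_square mult.assoc)
  qed (rule positive_op_form_nonneg[OF assms(1)])
  finally have prod: "(norm (X x))\<^sup>2 * (norm (X x))\<^sup>2 \<le> (c * Re (cinner (X x) x)) * (norm (X x))\<^sup>2"
    by (simp add: power2_eq_square mult_ac)
  show ?thesis
  proof (cases "X x = 0")
    case False
    then have "0 < (norm (X x))\<^sup>2"
      by simp
    with prod show ?thesis
      by (rule mult_right_le_imp_le)
  qed simp
qed

lemma positive_op_form_eq_0_imp_eq_0:
  assumes "positive_op X" and "Re (cinner (X y) y) = 0"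
  shows "X y = 0"
proof -
  obtain K where "\<And>z. norm (X z) \<le> norm z * K"
    using bounded_linear.bounded[OF bounded_clinear_imp_bounded_linear[OF
          positive_op_imp_bounded_clinear[OF assms(1)]]] by blast
  then have "(norm (X y))\<^sup>2 \<le> K * Re (cinner (X y) y)"
    by (intro positive_op_norm_square_le[OF assms(1)]) (simp add: mult.commute)
  then show ?thesis
    using assms(2) by simp
qed

lemma positive_op_norm_le:
  assumes "positive_op X" "0 \<le> c" and form_bound: "\<And>z. Re (cinner (X z) z) \<le> c * (norm z)\<^sup>2"
  shows "norm (X x) \<le> c * norm x"
proof -
  have "((norm (X x))\<^sup>2)\<^sup>2 \<le> Re (cinner (X x) x) * Re (cinner (X (X x)) (X x))"
    using positive_op_Cauchy_Schwarz[OF assms(1), of x "X x"] by (simp only: norm_cinner_self)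
  also have "\<dots> \<le> (c * (norm x)\<^sup>2) * (c * (norm (X x))\<^sup>2)"
    using positive_op_form_nonneg[OF assms(1)] assms(2) by (intro mult_mono form_bound) auto
  finally have prod: "(norm (X x))\<^sup>2 * (norm (X x))\<^sup>2 \<le> (c * norm x)\<^sup>2 * (norm (X x))\<^sup>2"
    by (simp add: power2_eq_square mult_ac)
  have "(norm (X x))\<^sup>2 \<le> (c * norm x)\<^sup>2"
  proof (cases "X x = 0")
    case False
    then have "0 < (norm (X x))\<^sup>2"
      by simp
    with prod show ?thesis
      by (rule mult_right_le_imp_le)
  qed simp
  then show ?thesis
    by (rule power2_le_imp_le) (simp add: assms(2))
qed

section \<open>Orthogonal complements, Riesz representation and the adjoint\<close>

definition csubspace :: "'a::complex_vector set \<Rightarrow> bool"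
  where "csubspace K \<longleftrightarrow> 0 \<in> K \<and> (\<forall>x\<in>K. \<forall>y\<in>K. x + y \<in> K) \<and> (\<forall>c. \<forall>x\<in>K. c *\<^sub>C x \<in> K)"

lemma csubspace_imp_convex: "csubspace K \<Longrightarrow> convex K"
  unfolding csubspace_def convex_def by (metis scaleR_scaleC)

lemma csubspace_range:
  assumes "bounded_clinear L"
  shows "csubspace (range L)"
  unfolding csubspace_def
proof (intro conjI ballI allI)
  show "0 \<in> range L"
    using rangeI[of L 0] by (simp add: bounded_clinear_apply(4)[OF assms])
  show "x + y \<in> range L" if "x \<in> range L" "y \<in> range L" for x y
  proof -
    from that obtain a b where "x = L a" "y = L b"
      by blast
    then show ?thesis
      using rangeI[of L "a + b"] by (simp add: bounded_clinear_apply(1)[OF assms])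
  qed
  show "c *\<^sub>C x \<in> range L" if "x \<in> range L" for c x
  proof -
    from that obtain a where "x = L a"
      by blast
    then show ?thesis
      using rangeI[of L "c *\<^sub>C a"] by (simp add: bounded_clinear_apply(6)[OF assms])
  qed
qed

lemma Cauchy_of_dist_square_le:
  fixes f :: "nat \<Rightarrow> 'a::metric_space"
  assumes "g \<longlonglongrightarrow> 0" and dist_le: "\<And>m n. (dist (f m) (f n))\<^sup>2 \<le> g m + g n"
  shows "Cauchy f"
proof (rule metric_CauchyI)
  fix e :: real
  assume "0 < e"
  then have "\<forall>\<^sub>F n in sequentially. g n < e\<^sup>2 / 2"
    by (intro order_tendstoD(2)[OF assms(1)]) simp
  then obtain M where M: "\<And>n. n \<ge> M \<Longrightarrow> g n < e\<^sup>2 / 2"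
    unfolding eventually_sequentially by blast
  have "dist (f m) (f n) < e" if "m \<ge> M" "n \<ge> M" for m n
  proof -
    have "(dist (f m) (f n))\<^sup>2 < e\<^sup>2"
      using dist_le[of m n] M[OF that(1)] M[OF that(2)] by linarith
    then show ?thesis
      using \<open>0 < e\<close> by (simp add: power_less_imp_less_base)
  qed
  then show "\<exists>M. \<forall>m\<ge>M. \<forall>n\<ge>M. dist (f m) (f n) < e"
    by blast
qed

text \<open>A minimizing sequence is Cauchy by the parallelogram law, because midpoints of its
  members stay in \<open>K\<close> and hence are no closer to \<open>u\<close> than the infimum.\<close>
lemma closed_convex_nearest_point:
  fixes K :: "'a::chilbert_space set"
  assumes "closed K" "convex K" "K \<noteq> {}"
  obtains k0 where "k0 \<in> K" "\<And>k. k \<in> K \<Longrightarrow> norm (u - k0) \<le> norm (u - k)"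
proof -
  define d where "d = (INF k\<in>K. (norm (u - k))\<^sup>2)"
  have d_le: "d \<le> (norm (u - k))\<^sup>2" if "k \<in> K" for k
    unfolding d_def by (rule cINF_lower) (use that in \<open>auto intro: bdd_belowI[of _ 0]\<close>)
  have "\<exists>k\<in>K. (norm (u - k))\<^sup>2 < d + inverse (Suc n)" for n
    using cInf_lessD[of "(\<lambda>k. (norm (u - k))\<^sup>2) ` K" "d + inverse (Suc n)"] assms(3)
    unfolding d_def by auto
  then obtain ks where ks: "\<And>n. ks n \<in> K" and
    ks_close: "\<And>n. (norm (u - ks n))\<^sup>2 < d + inverse (Suc n)"
    by metis
  have dist_le: "(dist (ks m) (ks n))\<^sup>2 \<le> 2 * inverse (Suc m) + 2 * inverse (Suc n)" for m n
  proof -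
    have "(1/2) *\<^sub>R ks m + (1/2) *\<^sub>R ks n \<in> K"
      using ks \<open>convex K\<close> by (simp add: convex_def)
    then have "4 * d \<le> (norm (2 *\<^sub>R (u - ((1/2) *\<^sub>R ks m + (1/2) *\<^sub>R ks n))))\<^sup>2"
      using d_le by (simp add: power_mult_distrib)
    also have "2 *\<^sub>R (u - ((1/2) *\<^sub>R ks m + (1/2) *\<^sub>R ks n)) = (u - ks m) + (u - ks n)"
      by (simp add: algebra_simps scaleR_2)
    finally have "4 * d \<le> (norm ((u - ks m) + (u - ks n)))\<^sup>2" .
    moreover have "(norm ((u - ks m) + (u - ks n)))\<^sup>2 + (dist (ks m) (ks n))\<^sup>2
        = 2 * (norm (u - ks m))\<^sup>2 + 2 * (norm (u - ks n))\<^sup>2"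
      using parallelogram_law[of "u - ks m" "u - ks n"] by (simp add: dist_norm norm_minus_commute)
    ultimately show ?thesis
      using ks_close[of m] ks_close[of n] by linarith
  qed
  have "(\<lambda>n. 2 * inverse (real (Suc n))) \<longlonglongrightarrow> 0"
    using tendsto_mult_right_zero[OF LIMSEQ_inverse_real_of_nat] by simp
  then have "Cauchy ks"
    using dist_le by (rule Cauchy_of_dist_square_le)
  then obtain k0 where lim: "ks \<longlonglongrightarrow> k0"
    using Cauchy_convergent convergent_def by blast
  have "k0 \<in> K"
    using \<open>closed K\<close> ks lim closed_sequentially by blast
  moreover have "(norm (u - k0))\<^sup>2 \<le> d"
  proof (rule LIMSEQ_le)
    show "(\<lambda>n. (norm (u - ks n))\<^sup>2) \<longlonglongrightarrow> (norm (u - k0))\<^sup>2"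
      by (intro tendsto_intros lim)
    show "(\<lambda>n. d + inverse (real (Suc n))) \<longlonglongrightarrow> d"
      using tendsto_add[OF tendsto_const LIMSEQ_inverse_real_of_nat, of d] by simp
  qed (use ks_close less_imp_le in blast)
  then have "norm (u - k0) \<le> norm (u - k)" if "k \<in> K" for k
    using d_le[OF that] by (rule power2_le_imp_le[OF order_trans]) simp_all
  ultimately show ?thesis
    using that by blast
qed

lemma nearest_point_orthogonal:
  assumes K: "csubspace K" and "k0 \<in> K" "k \<in> K"
    and nearest: "\<And>k. k \<in> K \<Longrightarrow> norm (u - k0) \<le> norm (u - k)"
  shows "cinner k (u - k0) = 0"
proof -
  define c where "c = cinner (u - k0) k"
  have "0 \<le> 0 - 2 * t * (cmod c)\<^sup>2 + t\<^sup>2 * (cmod c)\<^sup>2 * (norm k)\<^sup>2" for t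
  proof -
    have "k0 + (of_real t * c) *\<^sub>C k \<in> K"
      using K \<open>k0 \<in> K\<close> \<open>k \<in> K\<close> unfolding csubspace_def by blast
    then have "(norm (u - k0))\<^sup>2 \<le> (norm ((u - k0) - (of_real t * c) *\<^sub>C k))\<^sup>2"
      using nearest by (simp add: diff_diff_eq power_mono)
    also have "\<dots> = (norm (u - k0))\<^sup>2 - 2 * t * (cmod c)\<^sup>2 + t\<^sup>2 * (cmod c)\<^sup>2 * (norm k)\<^sup>2"
      using selfadjoint_form_along_line[of "\<lambda>x. x" c "u - k0" k t]
      by (simp add: bounded_clinear_ident selfadjoint_def c_def)
    finally show ?thesis
      by simp
  qed
  then have "(cmod c)\<^sup>2 \<le> 0 * (norm k)\<^sup>2"
    by (rule nonneg_quadratic_imp_le) simp_all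
  then show ?thesis
    by (simp add: c_def cinner_conj_sym[of k])
qed

lemma closed_csubspace_orthogonal_vector:
  fixes K :: "'a::chilbert_space set"
  assumes "closed K" "csubspace K" "u \<notin> K"
  obtains w where "w \<noteq> 0" "\<And>k. k \<in> K \<Longrightarrow> cinner k w = 0"
proof -
  have "K \<noteq> {}"
    using \<open>csubspace K\<close> unfolding csubspace_def by blast
  then obtain k0 where "k0 \<in> K" and nearest: "\<And>k. k \<in> K \<Longrightarrow> norm (u - k0) \<le> norm (u - k)"
    using closed_convex_nearest_point assms(1) csubspace_imp_convex[OF assms(2)] by blast
  show ?thesis
  proof
    show "u - k0 \<noteq> 0"
      using \<open>k0 \<in> K\<close> \<open>u \<notin> K\<close> by auto
    show "cinner k (u - k0) = 0" if "k \<in> K" for k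
      by (rule nearest_point_orthogonal[OF assms(2) \<open>k0 \<in> K\<close> that nearest])
  qed
qed

lemma Riesz_representation:
  fixes f :: "'a::chilbert_space \<Rightarrow> complex"
  assumes f: "bounded_linear f" and f_scaleC: "\<And>c x. f (c *\<^sub>C x) = c * f x"
  obtains z where "\<And>x. f x = cinner x z"
proof (cases "\<forall>x. f x = 0")
  case True
  then show ?thesis
    using that[of 0] by simp
next
  case False
  then obtain u where "f u \<noteq> 0"
    by blast
  define K where "K = {x. f x = 0}"
  have "closed K"
    unfolding K_def by (intro closed_Collect_eq continuous_on_const linear_continuous_on f)
  moreover have "csubspace K"
    using bounded_linear.linear[OF f] unfolding K_def csubspace_def
    by (simp add: linear_add linear_0 f_scaleC)
  ultimately obtain w where "w \<noteq> 0" and w_orth: "\<And>k. k \<in> K \<Longrightarrow> cinner k w = 0"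
    using closed_csubspace_orthogonal_vector \<open>f u \<noteq> 0\<close> unfolding K_def by blast
  have ww: "cinner w w \<noteq> 0"
    using \<open>w \<noteq> 0\<close> by (simp add: cinner_eq_zero_iff)
  show ?thesis
  proof
    fix x
    have "f x *\<^sub>C w - f w *\<^sub>C x \<in> K"
      using linear_diff[OF bounded_linear.linear[OF f]] by (simp add: K_def f_scaleC)
    then have "cinner (f x *\<^sub>C w - f w *\<^sub>C x) w = 0"
      by (rule w_orth)
    then have "f x * cinner w w = f w * cinner x w"
      by (simp add: cinner_diff_left cinner_scaleC_left)
    then show "f x = cinner x (cnj (f w / cinner w w) *\<^sub>C w)"
      using ww by (simp add: cinner_scaleC_right field_simps)
  qed
qed

lemma adjoint_exists:
  fixes T :: "'a::chilbert_space \<Rightarrow> 'a"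
  assumes "bounded_clinear T"
  shows "\<exists>S. \<forall>x y. cinner (T x) y = cinner x (S y)"
proof -
  have "\<exists>z. \<forall>x. cinner (T x) y = cinner x z" for y
  proof -
    have "bounded_linear (\<lambda>x. cinner (T x) y)"
      using bounded_bilinear.bounded_linear_left[OF bounded_bilinear_cinner]
        bounded_clinear_imp_bounded_linear[OF assms] by (rule bounded_linear_compose)
    then obtain z where "\<And>x. cinner (T x) y = cinner x z"
      by (rule Riesz_representation) (simp add: bounded_clinear_apply(6)[OF assms] cinner_scaleC_left, blast)
    then show ?thesis
      by blast
  qed
  then show ?thesis
    by metis
qed

lemma cinner_adj_right:
  assumes "bounded_clinear T"
  shows "cinner (T x) y = cinner x (adj T y)"
proof -
  have "\<forall>x y. cinner (T x) y = cinner x (adj T y)"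
    unfolding adj_def by (rule someI_ex[OF adjoint_exists[OF assms]])
  then show ?thesis
    by blast
qed

lemma cinner_adj_left: "bounded_clinear T \<Longrightarrow> cinner (adj T x) y = cinner x (T y)"
  by (metis cinner_adj_right cinner_conj_sym)

lemma bounded_clinear_adj:
  fixes T :: "'a::chilbert_space \<Rightarrow> 'a"
  assumes T: "bounded_clinear T"
  shows "bounded_clinear (adj T)"
proof -
  obtain K where K: "\<And>x. norm (T x) \<le> norm x * K" "K > 0"
    using bounded_linear.pos_bounded[OF bounded_clinear_imp_bounded_linear[OF T]] by blast
  have "norm (adj T y) \<le> norm y * K" for y
  proof (cases "adj T y = 0")
    case False
    have "(norm (adj T y))\<^sup>2 = Re (cinner (T (adj T y)) y)"
      by (simp add: cinner_adj_right[OF T])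
    also have "\<dots> \<le> norm (T (adj T y)) * norm y"
      by (rule Re_cinner_le)
    also have "\<dots> \<le> norm (adj T y) * K * norm y"
      by (rule mult_right_mono[OF K(1)]) simp
    finally have "norm (adj T y) * norm (adj T y) \<le> (norm y * K) * norm (adj T y)"
      by (simp add: power2_eq_square mult_ac)
    then show ?thesis
      by (rule mult_right_le_imp_le) (simp add: False)
  qed (use K(2) in simp)
  moreover have "adj T (x + y) = adj T x + adj T y" for x y
    by (rule cinner_eq_right_imp_eq) (simp add: cinner_adj_right[OF T, symmetric] cinner_add_right)
  moreover have "adj T (c *\<^sub>C x) = c *\<^sub>C adj T x" for c x
    by (rule cinner_eq_right_imp_eq) (simp add: cinner_adj_right[OF T, symmetric] cinner_scaleC_right)
  ultimately show ?thesis
    unfolding bounded_clinear_def by blast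
qed

lemma adj_adj:
  fixes T :: "'a::chilbert_space \<Rightarrow> 'a"
  assumes T: "bounded_clinear T"
  shows "adj (adj T) = T"
proof (intro ext cinner_eq_right_imp_eq)
  fix x y
  show "cinner y (adj (adj T) x) = cinner y (T x)"
    using cinner_adj_right[OF bounded_clinear_adj[OF T], of y x] cinner_adj_left[OF T, of y x]
    by simp
qed

lemma positive_op_adj_comp:
  fixes T :: "'a::chilbert_space \<Rightarrow> 'a"
  assumes T: "bounded_clinear T"
  shows "positive_op (adj T \<circ> T)"
proof -
  have "cinner (adj T (T x)) x = of_real ((norm (T x))\<^sup>2)" for x
    by (simp add: cinner_adj_left[OF T] cinner_self_eq_norm_square)
  then show ?thesis
    unfolding positive_op_def o_def
    using bounded_clinear_compose[OF bounded_clinear_adj[OF T] T] by simp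
qed

section \<open>Square roots of positive operators\<close>

lemma selfadjoint_funpow:
  fixes Q :: "'a::complex_inner \<Rightarrow> 'a"
  assumes "selfadjoint Q"
  shows "selfadjoint (Q ^^ k)"
proof (induction k)
  case 0
  show ?case
    by (simp add: selfadjoint_def)
next
  case (Suc k)
  have "cinner (Q ((Q ^^ k) x)) y = cinner x ((Q ^^ k) (Q y))" for x y
    using assms Suc unfolding selfadjoint_def by simp
  then show ?case
    unfolding selfadjoint_def by (simp add: funpow_swap1)
qed

lemma positive_op_funpow:
  assumes Q: "positive_op Q"
  shows "positive_op (Q ^^ k)"
proof (rule positive_opI)
  have sa: "selfadjoint (Q ^^ j)" for j
    by (rule selfadjoint_funpow[OF positive_op_imp_selfadjoint[OF Q]])
  show "bounded_clinear (Q ^^ k)"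
    by (rule bounded_clinear_funpow[OF positive_op_imp_bounded_clinear[OF Q]])
  show "selfadjoint (Q ^^ k)"
    by (rule sa)
  fix x
  define j where "j = k div 2"
  have "k = j + j \<or> k = Suc (j + j)"
    unfolding j_def by presburger
  then show "0 \<le> Re (cinner ((Q ^^ k) x) x)"
  proof
    assume "k = j + j"
    then have "(Q ^^ k) x = (Q ^^ j) ((Q ^^ j) x)"
      by (simp add: funpow_add)
    then have "cinner ((Q ^^ k) x) x = cinner ((Q ^^ j) x) ((Q ^^ j) x)"
      using sa[of j] by (simp add: selfadjoint_def)
    then show ?thesis
      by simp
  next
    assume "k = Suc (j + j)"
    then have "(Q ^^ k) x = (Q ^^ j) (Q ((Q ^^ j) x))"
      by (simp add: funpow_add funpow_swap1)
    then have "cinner ((Q ^^ k) x) x = cinner (Q ((Q ^^ j) x)) ((Q ^^ j) x)"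
      using sa[of j] by (simp add: selfadjoint_def)
    then show ?thesis
      using positive_op_form_nonneg[OF Q] by simp
  qed
qed

text \<open>Polynomials in \<open>Q\<close> with nonnegative coefficients. The square root iterates below are of
  this kind, which is how they are shown to commute and to be positive.\<close>
inductive nonneg_poly :: "('a::complex_inner \<Rightarrow> 'a) \<Rightarrow> ('a \<Rightarrow> 'a) \<Rightarrow> bool" for Q where
  nonneg_poly_funpow: "nonneg_poly Q (Q ^^ k)"
| nonneg_poly_add: "nonneg_poly Q X \<Longrightarrow> nonneg_poly Q Z \<Longrightarrow> nonneg_poly Q (\<lambda>x. X x + Z x)"
| nonneg_poly_scaleR: "0 \<le> c \<Longrightarrow> nonneg_poly Q X \<Longrightarrow> nonneg_poly Q (\<lambda>x. c *\<^sub>R X x)"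

lemma nonneg_poly_zero: "nonneg_poly Q (\<lambda>x. 0)"
  using nonneg_poly_scaleR[OF order_refl nonneg_poly_funpow[of Q 0]] by simp

lemma nonneg_poly_self: "nonneg_poly Q Q"
  using nonneg_poly_funpow[of Q 1] by simp

lemma nonneg_poly_positive_op:
  assumes "positive_op Q" "nonneg_poly Q X"
  shows "positive_op X"
  using assms(2)
proof (induction rule: nonneg_poly.induct)
  case (nonneg_poly_funpow k)
  show ?case
    by (rule positive_op_funpow[OF assms(1)])
qed (simp_all add: positive_op_add positive_op_const_scaleR)

lemma nonneg_poly_bounded_clinear:
  assumes "bounded_clinear Q" "nonneg_poly Q X"
  shows "bounded_clinear X"
  using assms(2)
  by (induction rule: nonneg_poly.induct)
    (simp_all add: assms(1) bounded_clinear_funpow bounded_clinear_add bounded_clinear_const_scaleR)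

lemma nonneg_poly_funpow_commute:
  assumes "bounded_clinear Q" "nonneg_poly Q Z"
  shows "(Q ^^ j) (Z x) = Z ((Q ^^ j) x)"
  using assms(2)
proof (induction arbitrary: x rule: nonneg_poly.induct)
  case (nonneg_poly_funpow k)
  then show ?case
    by (metis add.commute funpow_add o_apply)
qed (simp_all add: bounded_clinear_apply[OF bounded_clinear_funpow[OF assms(1)]])

lemma nonneg_poly_commute:
  assumes "bounded_clinear Q" "nonneg_poly Q X" "nonneg_poly Q Z"
  shows "X (Z x) = Z (X x)"
  using assms(2)
proof (induction arbitrary: x rule: nonneg_poly.induct)
  case (nonneg_poly_funpow k)
  then show ?case
    by (rule nonneg_poly_funpow_commute[OF assms(1,3)])
qed (simp_all add: bounded_clinear_apply[OF nonneg_poly_bounded_clinear[OF assms(1,3)]])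

lemma nonneg_poly_compose:
  assumes "bounded_clinear Q" "nonneg_poly Q X" "nonneg_poly Q Z"
  shows "nonneg_poly Q (\<lambda>x. X (Z x))"
  using assms(2)
proof (induction rule: nonneg_poly.induct)
  case (nonneg_poly_funpow j)
  show ?case
    using assms(3)
  proof (induction rule: nonneg_poly.induct)
    case (nonneg_poly_funpow k)
    then show ?case
      using nonneg_poly.nonneg_poly_funpow[of Q "j + k"] by (simp add: funpow_add o_def)
  qed (simp_all add: nonneg_poly.intros bounded_clinear_apply[OF bounded_clinear_funpow[OF assms(1)]])
qed (simp_all add: nonneg_poly.intros)

text \<open>A fixed point \<open>Y = (Q + Y\<^sup>2) / 2\<close> satisfies \<open>(I - Y)\<^sup>2 = I - Q\<close>.\<close>
primrec sqrt_iter :: "('a::real_vector \<Rightarrow> 'a) \<Rightarrow> nat \<Rightarrow> 'a \<Rightarrow> 'a" where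
  "sqrt_iter Q 0 = (\<lambda>x. 0)"
| "sqrt_iter Q (Suc n) = (\<lambda>x. (1/2) *\<^sub>R (Q x + sqrt_iter Q n (sqrt_iter Q n x)))"

definition sqrt_iter_lim :: "('a::chilbert_space \<Rightarrow> 'a) \<Rightarrow> 'a \<Rightarrow> 'a"
  where "sqrt_iter_lim Q x = lim (\<lambda>n. sqrt_iter Q n x)"

lemma nonneg_poly_sqrt_iter:
  assumes "bounded_clinear Q"
  shows "nonneg_poly Q (sqrt_iter Q n)"
proof (induction n)
  case 0
  then show ?case
    by (simp add: nonneg_poly_zero)
next
  case (Suc n)
  then show ?case
    by (simp add: nonneg_poly_scaleR nonneg_poly_add nonneg_poly_self nonneg_poly_compose[OF assms])
qed

lemma nonneg_poly_sqrt_iter_Suc_diff: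
  assumes Q: "bounded_clinear Q"
  shows "nonneg_poly Q (\<lambda>x. sqrt_iter Q (Suc n) x - sqrt_iter Q n x)"
proof (induction n)
  case 0
  then show ?case
    using nonneg_poly_sqrt_iter[OF Q, of 1] by simp
next
  case (Suc n)
  define Y1 Y0 where "Y1 = sqrt_iter Q (Suc n)" and "Y0 = sqrt_iter Q n"
  have Y1: "bounded_clinear Y1" and Y0: "bounded_clinear Y0"
    unfolding Y1_def Y0_def by (rule nonneg_poly_bounded_clinear[OF Q nonneg_poly_sqrt_iter[OF Q]])+
  have comm: "Y1 (Y0 x) = Y0 (Y1 x)" for x
    unfolding Y1_def Y0_def by (intro nonneg_poly_commute[OF Q] nonneg_poly_sqrt_iter[OF Q])
  have "sqrt_iter Q (Suc (Suc n)) x - sqrt_iter Q (Suc n) x = (1/2) *\<^sub>R (Y1 (Y1 x) - Y0 (Y0 x))" for x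
    unfolding Y1_def Y0_def by (simp add: algebra_simps)
  \<comment> \<open>\<open>Y\<^sub>1\<^sup>2 - Y\<^sub>0\<^sup>2 = (Y\<^sub>1 - Y\<^sub>0)(Y\<^sub>1 + Y\<^sub>0)\<close> because the iterates commute\<close>
  also have "Y1 (Y1 x) - Y0 (Y0 x) = Y1 (Y1 x + Y0 x) - Y0 (Y1 x + Y0 x)" for x
    using comm[of x] by (simp add: bounded_clinear_apply[OF Y1] bounded_clinear_apply[OF Y0])
  finally have diff: "sqrt_iter Q (Suc (Suc n)) x - sqrt_iter Q (Suc n) x
      = (1/2) *\<^sub>R (Y1 (Y1 x + Y0 x) - Y0 (Y1 x + Y0 x))" for x .
  have "nonneg_poly Q (\<lambda>x. Y1 x - Y0 x)"
    using Suc.IH by (simp only: Y1_def Y0_def)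
  moreover have "nonneg_poly Q (\<lambda>x. Y1 x + Y0 x)"
    unfolding Y1_def Y0_def by (intro nonneg_poly_add nonneg_poly_sqrt_iter Q)
  ultimately have "nonneg_poly Q (\<lambda>x. Y1 (Y1 x + Y0 x) - Y0 (Y1 x + Y0 x))"
    using nonneg_poly_compose[OF Q] by fastforce
  then have "nonneg_poly Q (\<lambda>x. (1/2) *\<^sub>R (Y1 (Y1 x + Y0 x) - Y0 (Y1 x + Y0 x)))"
    by (intro nonneg_poly_scaleR) simp_all
  then show ?case
    by (simp only: diff)
qed

lemma nonneg_poly_sqrt_iter_diff:
  assumes "bounded_clinear Q" "n \<le> m"
  shows "nonneg_poly Q (\<lambda>x. sqrt_iter Q m x - sqrt_iter Q n x)"
  using assms(2)
proof (induction m rule: dec_induct)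
  case base
  then show ?case
    using nonneg_poly_zero by simp
next
  case (step k)
  then show ?case
    using nonneg_poly_add[OF nonneg_poly_sqrt_iter_Suc_diff[OF assms(1), of k] step.IH]
    by (simp del: sqrt_iter.simps)
qed

lemma sqrt_iter_intertwine:
  assumes S: "bounded_clinear S" and "\<And>x. S (Q x) = R (S x)"
  shows "S (sqrt_iter Q n x) = sqrt_iter R n (S x)"
  by (induction n arbitrary: x) (simp_all add: bounded_clinear_apply[OF S] assms(2))

lemma bounded_clinear_pointwise_limit:
  fixes F :: "nat \<Rightarrow> 'a::{complex_vector,real_normed_vector} \<Rightarrow> 'b::complex_inner"
  assumes "\<And>n. bounded_clinear (F n)" and lim: "\<And>x. (\<lambda>n. F n x) \<longlonglongrightarrow> L x"
    and bound: "\<And>n x. norm (F n x) \<le> norm x * K"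
  shows "bounded_clinear L"
proof -
  have "(\<lambda>n. F n (x + y)) \<longlonglongrightarrow> L x + L y" for x y
    using tendsto_add[OF lim lim] by (simp add: bounded_clinear_apply[OF assms(1)])
  moreover have "(\<lambda>n. F n (c *\<^sub>C x)) \<longlonglongrightarrow> c *\<^sub>C L x" for c x
  proof -
    have "bounded_linear (\<lambda>x::'b. c *\<^sub>C x)"
      by (rule bounded_linear_intro[of _ "cmod c"])
        (simp_all add: scaleC_add_right norm_scaleC scaleR_scaleC scaleC_scaleC mult.commute)
    from bounded_linear.tendsto[OF this lim] show ?thesis
      by (simp add: bounded_clinear_apply[OF assms(1)])
  qed
  moreover have "norm (L x) \<le> norm x * K" for x
    using tendsto_norm[OF lim] by (rule LIMSEQ_le_const2) (simp add: bound)
  ultimately show ?thesis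
    unfolding bounded_clinear_def using lim LIMSEQ_unique by metis
qed

lemma positive_op_pointwise_limit:
  assumes "\<And>n. positive_op (F n)" and "bounded_clinear L" and lim: "\<And>x. (\<lambda>n. F n x) \<longlonglongrightarrow> L x"
  shows "positive_op L"
  unfolding positive_op_def
proof (intro conjI allI)
  fix x
  have "(\<lambda>n. cinner (F n x) x) \<longlonglongrightarrow> cinner (L x) x"
    by (intro tendsto_cinner lim tendsto_const)
  then have Re: "(\<lambda>n. Re (cinner (F n x) x)) \<longlonglongrightarrow> Re (cinner (L x) x)"
    and Im: "(\<lambda>n. Im (cinner (F n x) x)) \<longlonglongrightarrow> Im (cinner (L x) x)"
    by (simp_all add: tendsto_Re tendsto_Im)
  show "Im (cinner (L x) x) = 0"
    using LIMSEQ_unique[OF Im] assms(1) by (simp add: positive_op_def)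
  show "0 \<le> Re (cinner (L x) x)"
    using Re by (rule LIMSEQ_le_const) (simp add: positive_op_form_nonneg[OF assms(1)])
qed (rule assms(2))

lemma tendsto_pointwise_limit_apply:
  assumes "\<And>n. bounded_clinear (F n)" and bound: "\<And>n x. norm (F n x) \<le> norm x"
    and lim: "(\<lambda>n. F n y) \<longlonglongrightarrow> l" and "x \<longlonglongrightarrow> y"
  shows "(\<lambda>n. F n (x n)) \<longlonglongrightarrow> l"
proof -
  have "(\<lambda>n. norm (x n - y) + norm (F n y - l)) \<longlonglongrightarrow> 0"
    using tendsto_add[OF tendsto_norm_zero[OF LIM_zero[OF assms(4)]]
        tendsto_norm_zero[OF LIM_zero[OF lim]]] by simp
  then have "(\<lambda>n. F n (x n) - l) \<longlonglongrightarrow> 0"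
  proof (rule Lim_null_comparison[rotated])
    have "norm (F n (x n) - l) \<le> norm (F n (x n - y)) + norm (F n y - l)" for n
      using norm_triangle_ineq[of "F n (x n - y)" "F n y - l"]
      by (simp add: bounded_clinear_apply[OF assms(1)])
    then show "\<forall>\<^sub>F n in sequentially. norm (F n (x n) - l) \<le> norm (x n - y) + norm (F n y - l)"
      using bound by (meson add_right_mono always_eventually order_trans)
  qed
  then show ?thesis
    by (rule LIM_zero_cancel)
qed

locale positive_contraction =
  fixes Q :: "'a::chilbert_space \<Rightarrow> 'a"
  assumes positive: "positive_op Q" and contraction: "\<And>x. norm (Q x) \<le> norm x"
begin

lemma bounded: "bounded_clinear Q"
  by (rule positive_op_imp_bounded_clinear[OF positive])

lemma bounded_clinear_sqrt_iter: "bounded_clinear (sqrt_iter Q n)"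
  by (rule nonneg_poly_bounded_clinear[OF bounded nonneg_poly_sqrt_iter[OF bounded]])

lemma norm_sqrt_iter_le: "norm (sqrt_iter Q n x) \<le> norm x"
proof (induction n arbitrary: x)
  case 0
  then show ?case
    by simp
next
  case (Suc n)
  have "norm (Q x + sqrt_iter Q n (sqrt_iter Q n x)) \<le> norm x + norm x"
    using norm_triangle_ineq[of "Q x" "sqrt_iter Q n (sqrt_iter Q n x)"] contraction[of x] Suc[of "sqrt_iter Q n x"] Suc[of x]
    by linarith
  then show ?case
    by simp
qed

lemma sqrt_iter_dist_le:
  assumes "n \<le> m"
  shows "(norm (sqrt_iter Q m x - sqrt_iter Q n x))\<^sup>2
    \<le> 2 * (Re (cinner (sqrt_iter Q m x) x) - Re (cinner (sqrt_iter Q n x) x))"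
proof -
  have "positive_op (\<lambda>x. sqrt_iter Q m x - sqrt_iter Q n x)"
    by (rule nonneg_poly_positive_op[OF positive nonneg_poly_sqrt_iter_diff[OF bounded assms]])
  moreover have "norm (sqrt_iter Q m z - sqrt_iter Q n z) \<le> 2 * norm z" for z
    using norm_triangle_ineq4[of "sqrt_iter Q m z" "sqrt_iter Q n z"] norm_sqrt_iter_le[of m z] norm_sqrt_iter_le[of n z]
    by linarith
  ultimately have "(norm (sqrt_iter Q m x - sqrt_iter Q n x))\<^sup>2
      \<le> 2 * Re (cinner (sqrt_iter Q m x - sqrt_iter Q n x) x)"
    by (rule positive_op_norm_square_le)
  then show ?thesis
    by (simp add: cinner_diff_left)
qed

text \<open>The forms \<open>\<langle>Y\<^sub>n x, x\<rangle>\<close> increase and are bounded by \<open>\<parallel>x\<parallel>\<^sup>2\<close>; by the previous lemma the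
  iterates converge along with them.\<close>
lemma Cauchy_sqrt_iter: "Cauchy (\<lambda>n. sqrt_iter Q n x)"
proof -
  define r where "r n = Re (cinner (sqrt_iter Q n x) x)" for n
  have "incseq r"
  proof (rule incseq_SucI)
    fix n
    have "0 \<le> 2 * (r (Suc n) - r n)"
      using order_trans[OF zero_le_power2 sqrt_iter_dist_le[OF lessI[THEN less_imp_le], of n x]]
      by (simp add: r_def)
    then show "r n \<le> r (Suc n)"
      by simp
  qed
  moreover have "r n \<le> (norm x)\<^sup>2" for n
  proof -
    have "r n \<le> norm (sqrt_iter Q n x) * norm x"
      unfolding r_def by (rule Re_cinner_le)
    also have "\<dots> \<le> norm x * norm x"
      by (rule mult_right_mono[OF norm_sqrt_iter_le]) simp
    finally show ?thesis
      by (simp add: power2_eq_square)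
  qed
  then have "bdd_above (range r)"
    by (intro bdd_aboveI[of _ "(norm x)\<^sup>2"]) auto
  ultimately have r_lim: "r \<longlonglongrightarrow> (SUP n. r n)"
    by (rule LIMSEQ_incseq_SUP[rotated])
  have r_le: "r k \<le> (SUP n. r n)" for k
    by (rule incseq_le[OF \<open>incseq r\<close> r_lim])
  define g where "g n = 2 * ((SUP n. r n) - r n)" for n
  have "g \<longlonglongrightarrow> 2 * ((SUP n. r n) - (SUP n. r n))"
    unfolding g_def by (intro tendsto_intros r_lim)
  then have "g \<longlonglongrightarrow> 0"
    by simp
  moreover have "(dist (sqrt_iter Q m x) (sqrt_iter Q n x))\<^sup>2 \<le> g m + g n" for m n
  proof (cases "n \<le> m")
    case True
    then have "(dist (sqrt_iter Q m x) (sqrt_iter Q n x))\<^sup>2 \<le> 2 * (r m - r n)"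
      using sqrt_iter_dist_le[OF True, of x] by (simp add: dist_norm r_def)
    also have "\<dots> \<le> g m + g n"
      using r_le[of m] r_le[of n] unfolding g_def by (simp add: algebra_simps)
    finally show ?thesis .
  next
    case False
    then have "(dist (sqrt_iter Q m x) (sqrt_iter Q n x))\<^sup>2 \<le> 2 * (r n - r m)"
      using sqrt_iter_dist_le[of m n x] by (simp add: dist_norm norm_minus_commute r_def)
    also have "\<dots> \<le> g m + g n"
      using r_le[of m] r_le[of n] unfolding g_def by (simp add: algebra_simps)
    finally show ?thesis .
  qed
  ultimately show ?thesis
    by (rule Cauchy_of_dist_square_le)
qed

lemma tendsto_sqrt_iter: "(\<lambda>n. sqrt_iter Q n x) \<longlonglongrightarrow> sqrt_iter_lim Q x"
  unfolding sqrt_iter_lim_def using Cauchy_sqrt_iter Cauchy_convergent convergent_LIMSEQ_iff by blast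

lemma norm_sqrt_iter_lim_le: "norm (sqrt_iter_lim Q x) \<le> norm x"
  using tendsto_norm[OF tendsto_sqrt_iter] by (rule LIMSEQ_le_const2) (simp add: norm_sqrt_iter_le)

lemma positive_op_sqrt_iter_lim: "positive_op (sqrt_iter_lim Q)"
proof (rule positive_op_pointwise_limit)
  show "positive_op (sqrt_iter Q n)" for n
    by (rule nonneg_poly_positive_op[OF positive nonneg_poly_sqrt_iter[OF bounded]])
  show "bounded_clinear (sqrt_iter_lim Q)"
    using bounded_clinear_sqrt_iter tendsto_sqrt_iter
    by (rule bounded_clinear_pointwise_limit[where K = 1]) (simp add: norm_sqrt_iter_le)
qed (rule tendsto_sqrt_iter)

lemma sqrt_iter_lim_fixpoint:
  "sqrt_iter_lim Q x = (1/2) *\<^sub>R (Q x + sqrt_iter_lim Q (sqrt_iter_lim Q x))"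
proof (rule LIMSEQ_unique)
  show "(\<lambda>n. sqrt_iter Q (Suc n) x) \<longlonglongrightarrow> sqrt_iter_lim Q x"
    using tendsto_sqrt_iter by (rule LIMSEQ_Suc)
  have "(\<lambda>n. sqrt_iter Q n (sqrt_iter Q n x)) \<longlonglongrightarrow> sqrt_iter_lim Q (sqrt_iter_lim Q x)"
    using bounded_clinear_sqrt_iter norm_sqrt_iter_le tendsto_sqrt_iter tendsto_sqrt_iter
    by (rule tendsto_pointwise_limit_apply)
  then show "(\<lambda>n. sqrt_iter Q (Suc n) x)
      \<longlonglongrightarrow> (1/2) *\<^sub>R (Q x + sqrt_iter_lim Q (sqrt_iter_lim Q x))"
    by (simp add: tendsto_scaleR tendsto_add)
qed

end

lemma sqrt_iter_lim_intertwine: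
  assumes "positive_contraction Q1" "positive_contraction Q2"
    and S: "bounded_clinear S" and "\<And>x. S (Q1 x) = Q2 (S x)"
  shows "S (sqrt_iter_lim Q1 x) = sqrt_iter_lim Q2 (S x)"
proof (rule LIMSEQ_unique)
  show "(\<lambda>n. S (sqrt_iter Q1 n x)) \<longlonglongrightarrow> S (sqrt_iter_lim Q1 x)"
    by (rule bounded_linear.tendsto[OF bounded_clinear_imp_bounded_linear[OF S]
          positive_contraction.tendsto_sqrt_iter[OF assms(1)]])
  show "(\<lambda>n. S (sqrt_iter Q1 n x)) \<longlonglongrightarrow> sqrt_iter_lim Q2 (S x)"
    using positive_contraction.tendsto_sqrt_iter[OF assms(2)]
    by (simp add: sqrt_iter_intertwine[where Q = Q1 and R = Q2, OF S assms(4)])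
qed

lemma commuting_positive_square_roots_eq:
  assumes R: "positive_op R" and S: "positive_op S"
    and squares: "\<And>x. R (R x) = S (S x)" and commute: "\<And>x. R (S x) = S (R x)"
  shows "R = S"
proof
  fix x
  have bR: "bounded_clinear R" and bS: "bounded_clinear S"
    using R S by (simp_all add: positive_op_imp_bounded_clinear)
  define D where "D x = R x - S x" for x
  \<comment> \<open>\<open>(R + S)(R - S) = R\<^sup>2 - S\<^sup>2 = 0\<close>, and positivity of \<open>R\<close> and \<open>S\<close> then kills \<open>D\<^sup>2\<close>\<close>
  have DD: "D (D x) = 0"
  proof -
    have "R (D x) + S (D x) = 0"
      by (simp add: D_def bounded_clinear_apply[OF bR] bounded_clinear_apply[OF bS] squares commute)
    then have "Re (cinner (R (D x)) (D x)) + Re (cinner (S (D x)) (D x)) = 0"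
      by (metis cinner_add_left cinner_zero_left plus_complex.sel(1) zero_complex.sel(1))
    then have "Re (cinner (R (D x)) (D x)) = 0" "Re (cinner (S (D x)) (D x)) = 0"
      using positive_op_form_nonneg[OF R, of "D x"] positive_op_form_nonneg[OF S, of "D x"]
      by linarith+
    then have "R (D x) = 0" "S (D x) = 0"
      by (simp_all add: positive_op_form_eq_0_imp_eq_0[OF R] positive_op_form_eq_0_imp_eq_0[OF S])
    then show ?thesis
      unfolding D_def[of "D x"] by simp
  qed
  have "cinner (D x) (D x) = cinner (D (D x)) x"
    using positive_op_imp_selfadjoint[OF R] positive_op_imp_selfadjoint[OF S]
    by (simp add: selfadjoint_def D_def cinner_diff_left cinner_diff_right)
  then have "D x = 0"
    by (simp add: DD cinner_eq_zero_iff)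
  then show "R x = S x"
    by (simp add: D_def)
qed

text \<open>For \<open>Q = I - P / M\<close> and \<open>Y\<close> the limit of the iteration, \<open>(\<surd>M (I - Y))\<^sup>2 = M (I - Q) = P\<close>.\<close>
definition op_sqrt_scaled :: "('a::chilbert_space \<Rightarrow> 'a) \<Rightarrow> real \<Rightarrow> 'a \<Rightarrow> 'a"
  where "op_sqrt_scaled P M x = sqrt M *\<^sub>R (x - sqrt_iter_lim (\<lambda>y. y - (1 / M) *\<^sub>R P y) x)"

locale positive_op_bounded_by =
  fixes P :: "'a::chilbert_space \<Rightarrow> 'a" and M :: real
  assumes positive: "positive_op P" and bound_pos: "0 < M" and norm_le: "\<And>x. norm (P x) \<le> M * norm x"
begin

lemma positive_contraction_shift: "positive_contraction (\<lambda>y. y - (1 / M) *\<^sub>R P y)"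
proof -
  let ?Q = "\<lambda>y. y - (1 / M) *\<^sub>R P y"
  have form: "Re (cinner (?Q x) x) = (norm x)\<^sup>2 - Re (cinner (P x) x) / M" for x
    by (simp add: cinner_diff_left cinner_scaleR_left)
  have P_form_le: "Re (cinner (P x) x) \<le> M * (norm x)\<^sup>2" for x
  proof -
    have "Re (cinner (P x) x) \<le> norm (P x) * norm x"
      by (rule Re_cinner_le)
    also have "\<dots> \<le> M * norm x * norm x"
      by (rule mult_right_mono[OF norm_le]) simp
    finally show ?thesis
      by (simp add: power2_eq_square mult.assoc)
  qed
  have "bounded_clinear ?Q"
    by (intro bounded_clinear_diff bounded_clinear_ident bounded_clinear_const_scaleR
        positive_op_imp_bounded_clinear[OF positive])
  moreover have "selfadjoint ?Q"
    using positive_op_imp_selfadjoint[OF positive]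
    by (simp add: selfadjoint_def cinner_diff_left cinner_diff_right cinner_scaleR_left
        cinner_scaleR_right)
  moreover have "0 \<le> Re (cinner (?Q x) x)" for x
    unfolding form using bound_pos P_form_le[of x] by (simp add: pos_divide_le_eq mult.commute)
  ultimately have Q: "positive_op ?Q"
    by (rule positive_opI)
  have "norm (?Q x) \<le> 1 * norm x" for x
  proof (rule positive_op_norm_le[OF Q])
    show "Re (cinner (?Q z) z) \<le> 1 * (norm z)\<^sup>2" for z
      unfolding form using bound_pos positive_op_form_nonneg[OF positive, of z] by simp
  qed simp
  with Q show ?thesis
    by unfold_locales simp_all
qed

sublocale shift: positive_contraction "\<lambda>y. y - (1 / M) *\<^sub>R P y"
  by (rule positive_contraction_shift)

lemma positive_op_op_sqrt_scaled: "positive_op (op_sqrt_scaled P M)"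
proof -
  let ?Y = "sqrt_iter_lim (\<lambda>y. y - (1 / M) *\<^sub>R P y)"
  have Y: "positive_op ?Y"
    by (rule shift.positive_op_sqrt_iter_lim)
  show ?thesis
    unfolding op_sqrt_scaled_def
  proof (rule positive_opI)
    show "bounded_clinear (\<lambda>x. sqrt M *\<^sub>R (x - ?Y x))"
      by (intro bounded_clinear_const_scaleR bounded_clinear_diff bounded_clinear_ident
          positive_op_imp_bounded_clinear[OF Y])
    show "selfadjoint (\<lambda>x. sqrt M *\<^sub>R (x - ?Y x))"
      using positive_op_imp_selfadjoint[OF Y]
      by (simp add: selfadjoint_def cinner_diff_left cinner_diff_right cinner_scaleR_left
          cinner_scaleR_right)
    fix x
    have "Re (cinner (?Y x) x) \<le> norm (?Y x) * norm x"
      by (rule Re_cinner_le)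
    also have "\<dots> \<le> norm x * norm x"
      by (rule mult_right_mono[OF shift.norm_sqrt_iter_lim_le]) simp
    finally show "0 \<le> Re (cinner (sqrt M *\<^sub>R (x - ?Y x)) x)"
      using bound_pos by (simp add: cinner_diff_left cinner_scaleR_left power2_eq_square)
  qed
qed

lemma op_sqrt_scaled_square: "op_sqrt_scaled P M (op_sqrt_scaled P M x) = P x"
proof -
  define Y where "Y = sqrt_iter_lim (\<lambda>y. y - (1 / M) *\<^sub>R P y)"
  have bY: "bounded_clinear Y"
    unfolding Y_def by (rule positive_op_imp_bounded_clinear[OF shift.positive_op_sqrt_iter_lim])
  have "2 *\<^sub>R Y x = 2 *\<^sub>R ((1/2) *\<^sub>R ((x - (1 / M) *\<^sub>R P x) + Y (Y x)))"
    using shift.sqrt_iter_lim_fixpoint[of x] unfolding Y_def by (rule arg_cong)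
  then have "2 *\<^sub>R Y x = (x - (1 / M) *\<^sub>R P x) + Y (Y x)"
    by (simp only: scaleR_scaleR) simp
  then have YY: "Y (Y x) = 2 *\<^sub>R Y x - (x - (1 / M) *\<^sub>R P x)"
    by (metis add_diff_cancel_left')
  have "op_sqrt_scaled P M (op_sqrt_scaled P M x) = (sqrt M * sqrt M) *\<^sub>R (x - Y x - (Y x - Y (Y x)))"
    by (simp add: op_sqrt_scaled_def Y_def[symmetric] bounded_clinear_apply[OF bY] scaleR_diff_right)
  also have "x - Y x - (Y x - Y (Y x)) = (1 / M) *\<^sub>R P x"
    by (simp add: YY scaleR_2)
  also have "(sqrt M * sqrt M) *\<^sub>R (1 / M) *\<^sub>R P x = P x"
    using bound_pos by simp
  finally show ?thesis .
qed

end

lemma op_sqrt_scaled_intertwine: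
  fixes P1 P2 S :: "'a::chilbert_space \<Rightarrow> 'a"
  assumes "positive_op_bounded_by P1 M" "positive_op_bounded_by P2 M"
    and S: "bounded_clinear S" and intertwine: "\<And>x. S (P1 x) = P2 (S x)"
  shows "S (op_sqrt_scaled P1 M x) = op_sqrt_scaled P2 M (S x)"
proof -
  have "S (sqrt_iter_lim (\<lambda>y. y - (1 / M) *\<^sub>R P1 y) x)
      = sqrt_iter_lim (\<lambda>y. y - (1 / M) *\<^sub>R P2 y) (S x)"
    by (rule sqrt_iter_lim_intertwine[OF positive_op_bounded_by.positive_contraction_shift[OF assms(1)]
          positive_op_bounded_by.positive_contraction_shift[OF assms(2)] S])
      (simp add: bounded_clinear_apply[OF S] intertwine)
  then show ?thesis
    by (simp add: op_sqrt_scaled_def bounded_clinear_apply[OF S])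
qed

text \<open>A positive square root \<open>R\<close> of \<open>P\<close> commutes with \<open>P\<close>, hence with the constructed
  root, and commuting positive square roots coincide.\<close>
lemma (in positive_op_bounded_by) op_sqrt_eq_op_sqrt_scaled: "op_sqrt P = op_sqrt_scaled P M"
  unfolding op_sqrt_def
proof (rule the_equality)
  show "positive_op (op_sqrt_scaled P M) \<and> op_sqrt_scaled P M \<circ> op_sqrt_scaled P M = P"
    by (auto simp: positive_op_op_sqrt_scaled op_sqrt_scaled_square)
  fix R
  assume R: "positive_op R \<and> R \<circ> R = P"
  then have "R (P x) = P (R x)" for x
    by (metis comp_apply)
  then have "R (op_sqrt_scaled P M x) = op_sqrt_scaled P M (R x)" for x
    using op_sqrt_scaled_intertwine positive_op_bounded_by_axioms R
      positive_op_imp_bounded_clinear by blast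
  then show "R = op_sqrt_scaled P M"
    using R by (intro commuting_positive_square_roots_eq positive_op_op_sqrt_scaled)
      (auto simp: op_sqrt_scaled_square fun_eq_iff)
qed

lemma positive_op_common_bound:
  fixes P1 P2 :: "'a::chilbert_space \<Rightarrow> 'a"
  assumes "positive_op P1" "positive_op P2"
  obtains M where "positive_op_bounded_by P1 M" "positive_op_bounded_by P2 M"
proof -
  obtain K1 K2 where K1: "\<And>x. norm (P1 x) \<le> norm x * K1" "0 < K1"
    and K2: "\<And>x. norm (P2 x) \<le> norm x * K2" "0 < K2"
    using bounded_linear.pos_bounded bounded_clinear_imp_bounded_linear
      positive_op_imp_bounded_clinear assms by metis
  have "norm (P1 x) \<le> max K1 K2 * norm x" "norm (P2 x) \<le> max K1 K2 * norm x" for x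
    using K1(1)[of x] K2(1)[of x] mult_left_mono[of K1 "max K1 K2" "norm x"]
      mult_left_mono[of K2 "max K1 K2" "norm x"] by (simp_all add: mult.commute)
  moreover have "0 < max K1 K2"
    using K1(2) by simp
  ultimately show ?thesis
    using that[of "max K1 K2"] assms by (simp add: positive_op_bounded_by_def)
qed

lemma positive_op_op_sqrt: "positive_op P \<Longrightarrow> positive_op (op_sqrt P)"
  by (metis positive_op_common_bound positive_op_bounded_by.op_sqrt_eq_op_sqrt_scaled
      positive_op_bounded_by.positive_op_op_sqrt_scaled)

lemma op_sqrt_square: "positive_op P \<Longrightarrow> op_sqrt P (op_sqrt P x) = P x"
  by (metis positive_op_common_bound positive_op_bounded_by.op_sqrt_eq_op_sqrt_scaled
      positive_op_bounded_by.op_sqrt_scaled_square)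

lemma op_sqrt_intertwine:
  fixes P1 P2 S :: "'a::chilbert_space \<Rightarrow> 'a"
  assumes "positive_op P1" "positive_op P2"
    and "bounded_clinear S" "\<And>x. S (P1 x) = P2 (S x)"
  shows "S (op_sqrt P1 x) = op_sqrt P2 (S x)"
proof -
  obtain M where M: "positive_op_bounded_by P1 M" "positive_op_bounded_by P2 M"
    using positive_op_common_bound[OF assms(1,2)] .
  then show ?thesis
    using op_sqrt_scaled_intertwine[OF M assms(3,4)]
    by (simp add: positive_op_bounded_by.op_sqrt_eq_op_sqrt_scaled)
qed

section \<open>A mixed Schwarz inequality\<close>

lemma positive_op_shift: "positive_op A \<Longrightarrow> 0 \<le> \<epsilon> \<Longrightarrow> positive_op (\<lambda>x. A x + \<epsilon> *\<^sub>R x)"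
  by (simp add: positive_op_add positive_op_const_scaleR positive_op_ident)

lemma positive_op_shift_bounded_below:
  assumes "positive_op A" "0 \<le> \<epsilon>"
  shows "\<epsilon> * norm x \<le> norm (A x + \<epsilon> *\<^sub>R x)"
proof (cases "x = 0")
  case False
  have "\<epsilon> * norm x * norm x \<le> Re (cinner (A x + \<epsilon> *\<^sub>R x) x)"
    using positive_op_form_nonneg[OF assms(1), of x]
    by (simp add: cinner_add_left cinner_scaleR_left power2_eq_square)
  also have "\<dots> \<le> norm (A x + \<epsilon> *\<^sub>R x) * norm x"
    by (rule Re_cinner_le)
  finally show ?thesis
    using False by simp
qed simp

lemma selfadjoint_bounded_below_surj:
  fixes L :: "'a::chilbert_space \<Rightarrow> 'a"
  assumes L: "bounded_clinear L" "selfadjoint L"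
    and "0 < \<epsilon>" and below: "\<And>x. \<epsilon> * norm x \<le> norm (L x)"
  shows "surj L"
proof (rule ccontr)
  assume "\<not> surj L"
  then obtain y where "y \<notin> range L"
    by blast
  have "complete (range L)"
    using complete_isometric_image[of \<epsilon> UNIV L] \<open>0 < \<epsilon>\<close>
      bounded_clinear_imp_bounded_linear[OF L(1)] below complete_UNIV by simp
  then have "closed (range L)"
    by (rule complete_imp_closed)
  then obtain w where "w \<noteq> 0" and "\<And>k. k \<in> range L \<Longrightarrow> cinner k w = 0"
    using closed_csubspace_orthogonal_vector csubspace_range[OF L(1)] \<open>y \<notin> range L\<close> by blast
  \<comment> \<open>\<open>w\<close> is orthogonal to the range of \<open>L = L\<^sup>*\<close>, so \<open>L w = 0\<close>\<close>
  then have "cinner (L w) (L w) = 0"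
    using L(2) unfolding selfadjoint_def by (metis rangeI)
  then have "\<epsilon> * norm w \<le> 0"
    using below[of w] by (simp add: cinner_eq_zero_iff)
  with \<open>0 < \<epsilon>\<close> \<open>w \<noteq> 0\<close> show False
    by (simp add: mult_le_0_iff)
qed

lemma positive_op_shift_surj:
  fixes A :: "'a::chilbert_space \<Rightarrow> 'a"
  assumes "positive_op A" "0 < \<epsilon>"
  obtains w where "A w + \<epsilon> *\<^sub>R w = y"
proof -
  have shift: "positive_op (\<lambda>x. A x + \<epsilon> *\<^sub>R x)"
    using assms by (simp add: positive_op_shift)
  have "surj (\<lambda>x. A x + \<epsilon> *\<^sub>R x)"
    by (rule selfadjoint_bounded_below_surj[OF positive_op_imp_bounded_clinear[OF shift]
          positive_op_imp_selfadjoint[OF shift] assms(2)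
          positive_op_shift_bounded_below[OF assms(1) less_imp_le[OF assms(2)]]])
  then obtain w where "y = A w + \<epsilon> *\<^sub>R w"
    by (rule surjE)
  with that show ?thesis
    by simp
qed

lemma positive_op_shift_inj:
  assumes A: "positive_op A" and "0 < \<epsilon>" and eq: "A a + \<epsilon> *\<^sub>R a = A b + \<epsilon> *\<^sub>R b"
  shows "a = b"
proof -
  have "A (a - b) + \<epsilon> *\<^sub>R (a - b) = (A a + \<epsilon> *\<^sub>R a) - (A b + \<epsilon> *\<^sub>R b)"
    by (simp add: bounded_clinear_apply[OF positive_op_imp_bounded_clinear[OF A]]
        scaleR_diff_right algebra_simps)
  also have "\<dots> = 0"
    by (simp add: eq)
  finally have "A (a - b) + \<epsilon> *\<^sub>R (a - b) = 0" .
  then have "\<epsilon> * norm (a - b) \<le> 0"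
    using positive_op_shift_bounded_below[OF A, of \<epsilon> "a - b"] \<open>0 < \<epsilon>\<close> by simp
  then show ?thesis
    using \<open>0 < \<epsilon>\<close> by (simp add: mult_le_0_iff)
qed

text \<open>In operator terms: \<open>(B + \<epsilon>)\<^sup>-\<^sup>1 B\<^sup>2 \<le> B\<close>, since the difference is \<open>\<epsilon> (B + \<epsilon>)\<^sup>-\<^sup>1 B \<ge> 0\<close>.\<close>
lemma positive_op_resolvent_form_le:
  fixes B :: "'a::chilbert_space \<Rightarrow> 'a"
  assumes B: "positive_op B" and "0 < \<epsilon>" and v: "B v + \<epsilon> *\<^sub>R v = B (B y)"
  shows "Re (cinner y v) \<le> Re (cinner (B y) y)"
proof -
  have bB: "bounded_clinear B"
    by (rule positive_op_imp_bounded_clinear[OF B])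
  obtain z where z: "B z + \<epsilon> *\<^sub>R z = y"
    using positive_op_shift_surj[OF B \<open>0 < \<epsilon>\<close>] by blast
  define u where "u = \<epsilon> *\<^sub>R B z"
  have "B (B y - v) + \<epsilon> *\<^sub>R (B y - v) = \<epsilon> *\<^sub>R B y"
    using v by (simp add: bounded_clinear_apply[OF bB] scaleR_diff_right algebra_simps)
  moreover have "B u + \<epsilon> *\<^sub>R u = \<epsilon> *\<^sub>R B y"
    by (simp add: u_def z[symmetric] bounded_clinear_apply[OF bB] scaleR_add_right)
  ultimately have "B y - v = u"
    using positive_op_shift_inj[OF B \<open>0 < \<epsilon>\<close>, of "B y - v" u] by simp
  then have "v = B y - u"
    by (simp add: algebra_simps)
  then have "Re (cinner y v) = Re (cinner y (B y)) - Re (cinner y u)"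
    by (simp add: cinner_diff_right)
  moreover have "Re (cinner y u) = \<epsilon> * ((norm (B z))\<^sup>2 + \<epsilon> * Re (cinner (B z) z))"
  proof -
    have "cinner z (B z) = cinner (B z) z"
      using positive_op_imp_selfadjoint[OF B] by (simp add: selfadjoint_def)
    then show ?thesis
      by (simp add: u_def z[symmetric] cinner_add_left cinner_scaleR_left cinner_scaleR_right
          algebra_simps)
  qed
  moreover have "cinner y (B y) = cinner (B y) y"
    using positive_op_imp_selfadjoint[OF B] by (simp add: selfadjoint_def)
  ultimately show ?thesis
    using \<open>0 < \<epsilon>\<close> positive_op_form_nonneg[OF B, of z] by simp
qed

text \<open>Factor \<open>T\<^sup>* y = (A + \<epsilon>) w\<close>, apply the Schwarz inequality of the positive operator
  \<open>A + \<epsilon>\<close>, and compute \<open>\<langle>(A + \<epsilon>) w, w\<rangle> = \<langle>y, T w\<rangle>\<close> with \<open>(B + \<epsilon>) T w = T T\<^sup>* y = B\<^sup>2 y\<close>.\<close>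
lemma mixed_Schwarz_perturbed:
  fixes T A B :: "'a::chilbert_space \<Rightarrow> 'a"
  assumes T: "bounded_clinear T" and A: "positive_op A" and B: "positive_op B"
    and TA: "\<And>x. T (A x) = B (T x)" and BB: "\<And>x. B (B x) = T (adj T x)" and "0 < \<epsilon>"
  shows "(cmod (cinner (T x) y))\<^sup>2 \<le> (Re (cinner (A x) x) + \<epsilon> * (norm x)\<^sup>2) * Re (cinner (B y) y)"
proof -
  define Ae where "Ae v = A v + \<epsilon> *\<^sub>R v" for v
  have Ae: "positive_op Ae"
    unfolding Ae_def using A \<open>0 < \<epsilon>\<close> by (simp add: positive_op_shift)
  obtain w where w: "Ae w = adj T y"
    unfolding Ae_def using positive_op_shift_surj[OF A \<open>0 < \<epsilon>\<close>] by blast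
  have "cinner (T x) y = cinner (Ae x) w"
    using positive_op_imp_selfadjoint[OF Ae]
    by (simp add: cinner_adj_right[OF T] w[symmetric] selfadjoint_def)
  then have "(cmod (cinner (T x) y))\<^sup>2 \<le> Re (cinner (Ae x) x) * Re (cinner (Ae w) w)"
    by (simp add: positive_op_Cauchy_Schwarz[OF Ae])
  also have "Re (cinner (Ae w) w) \<le> Re (cinner (B y) y)"
  proof -
    have "B (T w) + \<epsilon> *\<^sub>R T w = T (Ae w)"
      by (simp add: Ae_def TA bounded_clinear_apply[OF T])
    also have "\<dots> = B (B y)"
      by (simp add: w BB)
    finally have "Re (cinner y (T w)) \<le> Re (cinner (B y) y)"
      by (rule positive_op_resolvent_form_le[OF B \<open>0 < \<epsilon>\<close>])
    moreover have "cinner (Ae w) w = cinner y (T w)"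
      by (simp add: w cinner_adj_left[OF T])
    ultimately show ?thesis
      by simp
  qed
  then have "Re (cinner (Ae x) x) * Re (cinner (Ae w) w) \<le> Re (cinner (Ae x) x) * Re (cinner (B y) y)"
    by (rule mult_left_mono) (rule positive_op_form_nonneg[OF Ae])
  also have "Re (cinner (Ae x) x) = Re (cinner (A x) x) + \<epsilon> * (norm x)\<^sup>2"
    by (simp add: Ae_def cinner_add_left cinner_scaleR_left)
  finally show ?thesis .
qed

lemma le_mult_of_perturbed_le:
  fixes a b c n :: real
  assumes perturbed: "\<And>\<epsilon>. 0 < \<epsilon> \<Longrightarrow> c \<le> (a + \<epsilon> * n) * b" and "0 \<le> n" "0 \<le> b"
  shows "c \<le> a * b"
proof (rule field_le_epsilon)
  fix e :: real
  assume "0 < e"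
  define \<epsilon> where "\<epsilon> = e / (n * b + 1)"
  have "0 \<le> n * b"
    using assms(2,3) by simp
  then have "0 < \<epsilon>" and "\<epsilon> * n * b \<le> e"
    using \<open>0 < e\<close> by (simp_all add: \<epsilon>_def field_simps)
  then show "c \<le> a * b + e"
    using perturbed[of \<epsilon>] by (simp add: algebra_simps)
qed

lemma mixed_Schwarz:
  fixes T A B :: "'a::chilbert_space \<Rightarrow> 'a"
  assumes "bounded_clinear T" "positive_op A" "positive_op B"
    and "\<And>x. T (A x) = B (T x)" and "\<And>x. B (B x) = T (adj T x)"
  shows "(cmod (cinner (T x) y))\<^sup>2 \<le> Re (cinner (A x) x) * Re (cinner (B y) y)"
  using mixed_Schwarz_perturbed[OF assms] zero_le_power2 positive_op_form_nonneg[OF assms(3)]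
  by (rule le_mult_of_perturbed_le)

section \<open>The numerical radius bound\<close>

lemma positive_op_abs_op: "bounded_clinear T \<Longrightarrow> positive_op (abs_op T)"
  unfolding abs_op_def by (intro positive_op_op_sqrt positive_op_adj_comp)

lemma abs_op_square: "bounded_clinear T \<Longrightarrow> abs_op T (abs_op T x) = adj T (T x)"
  unfolding abs_op_def by (simp add: op_sqrt_square positive_op_adj_comp)

lemma abs_op_adj_square:
  fixes T :: "'a::chilbert_space \<Rightarrow> 'a"
  assumes "bounded_clinear T"
  shows "abs_op (adj T) (abs_op (adj T) x) = T (adj T x)"
  using abs_op_square[OF bounded_clinear_adj[OF assms]] by (simp add: adj_adj[OF assms])

lemma abs_op_intertwine:
  fixes T :: "'a::chilbert_space \<Rightarrow> 'a"
  assumes T: "bounded_clinear T"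
  shows "T (abs_op T x) = abs_op (adj T) (T x)"
  unfolding abs_op_def adj_adj[OF T]
proof (rule op_sqrt_intertwine[OF positive_op_adj_comp[OF T] _ T])
  show "positive_op (T \<circ> adj T)"
    using positive_op_adj_comp[OF bounded_clinear_adj[OF T]] by (simp add: adj_adj[OF T])
qed simp

lemma mult_add_mult_le_sqrt: "(a::real) * b + p * q \<le> sqrt (a\<^sup>2 + p\<^sup>2) * sqrt (b\<^sup>2 + q\<^sup>2)"
proof -
  have "(a * b + p * q)\<^sup>2 + (a * q - p * b)\<^sup>2 = (a\<^sup>2 + p\<^sup>2) * (b\<^sup>2 + q\<^sup>2)"
    by (simp add: power2_eq_square algebra_simps)
  then have "(a * b + p * q)\<^sup>2 \<le> (a\<^sup>2 + p\<^sup>2) * (b\<^sup>2 + q\<^sup>2)"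
    using zero_le_power2[of "a * q - p * b"] by linarith
  then have "a * b + p * q \<le> sqrt ((a\<^sup>2 + p\<^sup>2) * (b\<^sup>2 + q\<^sup>2))"
    by (rule real_le_rsqrt)
  then show ?thesis
    by (simp add: real_sqrt_mult)
qed

text \<open>Write \<open>Ax = ax + u\<close> and \<open>Bx = bx + v\<close> with \<open>u, v \<bottom> x\<close>; then the covariance is
  \<open>\<langle>v, u\<rangle>\<close>.\<close>
lemma selfadjoint_covariance_le:
  fixes A B :: "'a::complex_inner \<Rightarrow> 'a"
  assumes "selfadjoint A" "selfadjoint B" "norm x = 1"
  defines "a \<equiv> Re (cinner (A x) x)" and "b \<equiv> Re (cinner (B x) x)"
  shows "cmod (cinner (A (B x)) x - cinner (A x) x * cinner (B x) x)
    \<le> sqrt ((norm (A x))\<^sup>2 - a\<^sup>2) * sqrt ((norm (B x))\<^sup>2 - b\<^sup>2)"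
proof -
  have ca: "cinner (A x) x = of_real a" and cb: "cinner (B x) x = of_real b"
    unfolding a_def b_def
    by (fact selfadjoint_cinner_self_real[OF assms(1)] selfadjoint_cinner_self_real[OF assms(2)])+
  have xx: "cinner x x = 1"
    using assms(3) by (simp add: cinner_self_eq_norm_square)
  define u v where "u = A x - a *\<^sub>R x" and "v = B x - b *\<^sub>R x"
  have orth: "cinner u x = 0" "cinner x u = 0" "cinner v x = 0" "cinner x v = 0"
    unfolding u_def v_def using ca cb xx cinner_conj_sym[of x "A x"] cinner_conj_sym[of x "B x"]
    by (simp_all add: cinner_diff_left cinner_diff_right cinner_scaleR_left cinner_scaleR_right)
  have Ax: "A x = a *\<^sub>R x + u" and Bx: "B x = b *\<^sub>R x + v"
    by (simp_all add: u_def v_def)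
  have "cinner (A (B x)) x = cinner (B x) (A x)"
    using assms(1) by (simp add: selfadjoint_def)
  also have "\<dots> = of_real (a * b) + cinner v u"
    unfolding Ax Bx by (simp add: cinner_simps orth xx)
  finally have "cinner (A (B x)) x - cinner (A x) x * cinner (B x) x = cinner v u"
    by (simp add: ca cb)
  moreover have "(norm (A x))\<^sup>2 = a\<^sup>2 + (norm u)\<^sup>2" "(norm (B x))\<^sup>2 = b\<^sup>2 + (norm v)\<^sup>2"
  proof -
    have "cinner (A x) (A x) = of_real (a\<^sup>2) + cinner u u"
      "cinner (B x) (B x) = of_real (b\<^sup>2) + cinner v v"
      unfolding Ax Bx by (simp_all add: cinner_simps orth xx power2_eq_square)
    then show "(norm (A x))\<^sup>2 = a\<^sup>2 + (norm u)\<^sup>2" "(norm (B x))\<^sup>2 = b\<^sup>2 + (norm v)\<^sup>2"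
      by (metis Re_cinner_self Re_complex_of_real plus_complex.sel(1))+
  qed
  ultimately show ?thesis
    using norm_cinner_le[of v u] by (simp add: mult.commute)
qed

lemma cinner_square_add_covariance_le:
  fixes T A B :: "'a::chilbert_space \<Rightarrow> 'a"
  assumes T: "bounded_clinear T" and A: "positive_op A" and B: "positive_op B"
    and TA: "\<And>x. T (A x) = B (T x)" and BB: "\<And>x. B (B x) = T (adj T x)"
    and "norm x = 1"
  shows "(cmod (cinner (T x) x))\<^sup>2 + cmod (cinner (A (B x)) x - cinner (A x) x * cinner (B x) x)
      \<le> onorm (\<lambda>x. A (A x) + B (B x)) / 2"
proof -
  define a b where "a = Re (cinner (A x) x)" and "b = Re (cinner (B x) x)"
  have abs_le: "\<bar>a\<bar> \<le> norm (A x)" "\<bar>b\<bar> \<le> norm (B x)"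
    unfolding a_def b_def using norm_cinner_le abs_Re_le_cmod \<open>norm x = 1\<close>
    by (metis mult.right_neutral order_trans)+
  have sq: "a\<^sup>2 \<le> (norm (A x))\<^sup>2" "b\<^sup>2 \<le> (norm (B x))\<^sup>2"
    using power_mono[OF abs_le(1) abs_ge_zero, of 2] power_mono[OF abs_le(2) abs_ge_zero, of 2]
    by simp_all
  have "(cmod (cinner (T x) x))\<^sup>2 + cmod (cinner (A (B x)) x - cinner (A x) x * cinner (B x) x)
      \<le> a * b + sqrt ((norm (A x))\<^sup>2 - a\<^sup>2) * sqrt ((norm (B x))\<^sup>2 - b\<^sup>2)"
    using mixed_Schwarz[OF T A B TA BB, of x x] unfolding a_def b_def
    by (intro add_mono selfadjoint_covariance_le positive_op_imp_selfadjoint A B \<open>norm x = 1\<close>)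
  also have "\<dots> \<le> norm (A x) * norm (B x)"
    using mult_add_mult_le_sqrt[of a b "sqrt ((norm (A x))\<^sup>2 - a\<^sup>2)" "sqrt ((norm (B x))\<^sup>2 - b\<^sup>2)"] sq
    by simp
  also have "\<dots> \<le> ((norm (A x))\<^sup>2 + (norm (B x))\<^sup>2) / 2"
    using sum_squares_bound[of "norm (A x)" "norm (B x)"] by simp
  also have "(norm (A x))\<^sup>2 + (norm (B x))\<^sup>2 = Re (cinner (A x) (A x) + cinner (B x) (B x))"
    by simp
  also have "\<dots> = Re (cinner (A (A x) + B (B x)) x)"
    using positive_op_imp_selfadjoint[OF A] positive_op_imp_selfadjoint[OF B]
    by (simp add: selfadjoint_def cinner_add_left)
  also have "\<dots> \<le> norm (A (A x) + B (B x))"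
    using Re_cinner_le[of "A (A x) + B (B x)" x] \<open>norm x = 1\<close> by simp
  also have "\<dots> \<le> onorm (\<lambda>x. A (A x) + B (B x))"
    using onorm[of "\<lambda>x. A (A x) + B (B x)" x] \<open>norm x = 1\<close> positive_op_imp_bounded_clinear[OF A]
      positive_op_imp_bounded_clinear[OF B]
    by (simp add: bounded_clinear_imp_bounded_linear bounded_clinear_add bounded_clinear_compose)
  finally show ?thesis
    by (simp add: divide_right_mono)
qed

lemma SUP_square_add_INF_le:
  fixes f g :: "'a \<Rightarrow> real"
  assumes "U \<noteq> {}" and f: "\<And>x. x \<in> U \<Longrightarrow> 0 \<le> f x" and g: "\<And>x. x \<in> U \<Longrightarrow> 0 \<le> g x"
    and le: "\<And>x. x \<in> U \<Longrightarrow> (f x)\<^sup>2 + g x \<le> C"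
  shows "(SUP x\<in>U. f x)\<^sup>2 + (INF x\<in>U. g x) \<le> C"
proof -
  define I where "I = (INF x\<in>U. g x)"
  have I_le: "I \<le> g x" if "x \<in> U" for x
    unfolding I_def using g that by (intro cINF_lower bdd_belowI[of _ 0]) auto
  then have f_le: "f x \<le> sqrt (C - I)" if "x \<in> U" for x
    using le[OF that] f[OF that] that by (intro real_le_rsqrt) fastforce
  obtain x0 where "x0 \<in> U"
    using \<open>U \<noteq> {}\<close> by blast
  have "0 \<le> (SUP x\<in>U. f x)"
    using f[OF \<open>x0 \<in> U\<close>] cSUP_upper[OF \<open>x0 \<in> U\<close>, of f] f_le
    by (meson bdd_aboveI2 order_trans)
  moreover have "(SUP x\<in>U. f x) \<le> sqrt (C - I)"
    using \<open>U \<noteq> {}\<close> f_le by (rule cSUP_least)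
  moreover have "0 \<le> C - I"
    using le[OF \<open>x0 \<in> U\<close>] I_le[OF \<open>x0 \<in> U\<close>] zero_le_power2[of "f x0"] by linarith
  ultimately have "(SUP x\<in>U. f x)\<^sup>2 \<le> C - I"
    using power_mono[of "SUP x\<in>U. f x" "sqrt (C - I)" 2] by simp
  then show ?thesis
    by (simp add: I_def)
qed

theorem corollary4p2:
  fixes T :: "'a::chilbert_space \<Rightarrow> 'a"
  assumes "bounded_clinear T"
    and "\<exists>x::'a. x \<noteq> 0"
  shows "(numerical_radius T)\<^sup>2 +
      (INF x\<in>{x::'a. norm x = 1}.
         cmod (cinner (abs_op T (abs_op (adj T) x)) x
               - cinner (abs_op T x) x * cinner (abs_op (adj T) x) x))
    \<le> onorm (\<lambda>x. abs_op T (abs_op T x) + abs_op (adj T) (abs_op (adj T) x)) / 2"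
proof -
  have T: "bounded_clinear T" by (rule assms(1))
  obtain x0 :: 'a where "x0 \<noteq> 0"
    using assms(2) by blast
  then have "(1 / norm x0) *\<^sub>R x0 \<in> {x. norm x = 1}"
    by simp
  then have "{x::'a. norm x = 1} \<noteq> {}"
    by blast
  moreover have "(cmod (cinner (T x) x))\<^sup>2
      + cmod (cinner (abs_op T (abs_op (adj T) x)) x - cinner (abs_op T x) x * cinner (abs_op (adj T) x) x)
      \<le> onorm (\<lambda>x. abs_op T (abs_op T x) + abs_op (adj T) (abs_op (adj T) x)) / 2"
    if "norm x = 1" for x
    by (rule cinner_square_add_covariance_le[OF T positive_op_abs_op[OF T]
          positive_op_abs_op[OF bounded_clinear_adj[OF T]] abs_op_intertwine[OF T]
          abs_op_adj_square[OF T] that])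
  ultimately show ?thesis
    unfolding numerical_radius_def by (intro SUP_square_add_INF_le) auto
qed

end
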